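(* Let $i\ge 3$ and $k\ge 3$ be integers, let $p$ be a nonnegative integer, and put $r=\lfloor (F_i-1)/F_k\rfloor$. If $r\ge p$ and $(r,p)\ne(0,0)$, then $$g_p(F_i,F_{i+2},F_{i+k})=\begin{cases}(F_i-rF_k-1)F_{i+2}+(r+p)F_{i+k}-F_i & \text{if } (F_i-rF_k)F_{i+2}\ge F_{k-2}F_i,\\ (F_k-1)F_{i+2}+(r+p-1)F_{i+k}-F_i & \text{if } (F_i-rF_k)F_{i+2}< F_{k-2}F_i.\end{cases}$$
   Context: Fibonacci numbers: $F_0=0$, $F_1=1$, $F_n=F_{n-1}+F_{n-2}$. For positive integers $a_1,\dots,a_l$ with $\gcd(a_1,\dots,a_l)=1$ and an integer $n$, let $d(n;a_1,\dots,a_l)$ be the number of tuples $(x_1,\dots,x_l)$ of nonnegative integers with $a_1x_1+\dots+a_lx_l=n$. For a nonnegative integer $p$, the $p$-Frobenius number $g_p(a_1,\dots,a_l)$ is the largest integer $n$ with $d(n;a_1,\dots,a_l)\le p$. *)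

theory Defs
  imports "HOL-Analysis.Analysis" "HOL-Number_Theory.Fib"
begin

definition num_repr :: "int \<Rightarrow> nat list \<Rightarrow> nat" where
  "num_repr n as = card {xs :: nat list. length xs = length as \<and>
      (\<Sum>j<length as. int (as ! j) * int (xs ! j)) = n}"

definition p_frobenius :: "nat \<Rightarrow> nat list \<Rightarrow> int" where
  "p_frobenius p as = (GREATEST n :: int. num_repr n as \<le> p)"

end

theory Submission
  imports Defs
begin

text \<open>Write \<open>a = F\<^sub>i\<close>, \<open>b = F\<^sub>i\<^sub>+\<^sub>2\<close>, \<open>c = F\<^sub>i\<^sub>+\<^sub>k\<close>, \<open>f = F\<^sub>k\<close>, \<open>g = F\<^sub>k\<^sub>-\<^sub>2\<close>. Then \<open>c + g a = f b\<close>
  and \<open>a = r f + s\<close> with \<open>1 \<le> s \<le> f\<close>. As \<open>a\<close> and \<open>b\<close> are coprime, all solutions of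
  \<open>a x + b y + c z = n\<close> differ from a fixed one by multiples of \<open>(-b, a, 0)\<close> and by the moves
  \<open>(x, y, z) \<mapsto> (x + g, y - f, z + 1)\<close>. For the two candidates
  \<open>N\<^sub>1 = (s - 1) b + (r + p) c - a\<close> and \<open>N\<^sub>2 = (f - 1) b + (r + p - 1) c - a\<close> nonnegativity
  rules out every multiple of \<open>(-b, a, 0)\<close> but the trivial one, and forces \<open>z < p\<close>; so both have
  at most \<open>p\<close> representations. Conversely, for \<open>n > max N\<^sub>1 N\<^sub>2\<close> pick \<open>0 \<le> y < a\<close> with
  \<open>y b \<equiv> n (mod a)\<close>: the pairs \<open>(Y, Z)\<close> with \<open>Y + f Z \<in> {y, y + a}\<close> all lie in the right residue
  class, and \<open>p + 1\<close> of them, with distinct \<open>Z\<close>, are small enough to be completed by some \<open>x \<ge> 0\<close>.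
  Finally \<open>N\<^sub>1 - N\<^sub>2 = s b - g a\<close> decides which candidate is the larger.\<close>

lemma fib_add_mult_eq: "fib (i + k + 2) + fib k * fib i = fib (k + 2) * fib (i + 2)"
proof -
  have "fib (i + k + 2) = fib (k + 1) * fib (i + 2) + fib k * fib (i + 1)"
    using fib_add[of "i + 1" k] by (simp add: ac_simps)
  then show ?thesis
    by (simp add: fib_plus_2[of i] fib_plus_2[of k] algebra_simps)
qed

lemma coprime_fib_fib_plus_2: "coprime (fib n) (fib (n + 2))"
  using gcd_fib_add[of n 2] by (simp add: coprime_iff_gcd_eq_1 add.commute)

lemma two_fib_le_fib_plus_2: "2 * fib n \<le> fib (n + 2)"
  using fib_Suc_mono[of n] by (simp add: fib_plus_2)

lemma num_repr_three:
  "num_repr n [a, b, c] = card {(x, y, z). int a * int x + int b * int y + int c * int z = n}"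
  unfolding num_repr_def
  by (rule bij_betw_same_card[symmetric, of "\<lambda>(x, y, z). [x, y, z]"])
    (auto simp: bij_betw_def inj_on_def numeral_3_eq_3 lessThan_Suc length_Suc_conv image_def)

lemma p_frobenius_eqI:
  assumes "num_repr N as \<le> p" and "\<And>n. N < n \<Longrightarrow> p < num_repr n as"
  shows "p_frobenius p as = N"
  unfolding p_frobenius_def
  by (rule Greatest_equality) (use assms in \<open>auto simp: not_less[symmetric]\<close>)

lemma coprime_obtain_residue:
  fixes a b n :: int
  assumes "coprime a b" and "0 < a"
  obtains y where "0 \<le> y" and "y < a" and "a dvd (n - y * b)"
proof -
  obtain u v where uv: "u * a + v * b = 1"
    using bezout_int[of a b] assms(1) by (auto simp: coprime_iff_gcd_eq_1)
  define y where "y = (n * v) mod a"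
  have "n - y * b = a * (n * u + (n * v) div a * b)"
  proof -
    have "n - y * b = n * (u * a + v * b) - y * b"
      using uv by simp
    also have "\<dots> = a * (n * u) + (n * v - y) * b"
      by (simp add: algebra_simps)
    also have "n * v - y = a * ((n * v) div a)"
      unfolding y_def by (simp add: minus_mod_eq_mult_div)
    finally show ?thesis
      by (simp add: algebra_simps)
  qed
  then show thesis
    using assms(2) by (intro that[of y]) (auto simp: y_def)
qed

text \<open>Here \<open>a, b, c, f, g\<close> are as above and \<open>s = F\<^sub>i - r F\<^sub>k\<close>; the proof uses only these relations.\<close>
locale frobenius_setting =
  fixes a b c f g r s p :: int
  assumes c_eq: "c + g * a = f * b"
    and a_eq: "a = r * f + s" and s_ge: "1 \<le> s" and s_le: "s \<le> f"
    and g_ge: "1 \<le> g" and two_g_le: "2 * g \<le> f" and two_a_le: "2 * a \<le> b"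
    and p_ge: "0 \<le> p" and p_le: "p \<le> r" and r_ge: "1 \<le> r"
    and coprime_ab: "coprime a b"
begin

definition reps :: "int \<Rightarrow> (nat \<times> nat \<times> nat) set" where
  "reps n = {(x, y, z). a * int x + b * int y + c * int z = n}"

definition frob :: int where
  "frob = max ((s - 1) * b + (r + p) * c) ((f - 1) * b + (r + p - 1) * c) - a"

lemma c_eq_diff: "c = f * b - g * a"
  using c_eq by simp

lemma f_ge: "2 \<le> f"
  using g_ge two_g_le by linarith

lemma f_gt: "0 < f"
  using f_ge by simp

lemma f_le_a: "f \<le> a"
proof -
  have "1 * f \<le> r * f"
    using r_ge f_ge by (intro mult_right_mono) auto
  then show ?thesis
    using a_eq s_ge by linarith
qed

lemma pf_le_a: "p * f \<le> a"
proof -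
  have "p * f \<le> r * f"
    using p_le f_ge by (intro mult_right_mono) auto
  then show ?thesis
    using a_eq s_ge by linarith
qed

lemma a_gt: "0 < a" and b_gt: "0 < b"
  using f_le_a f_ge two_a_le by auto

lemma ga_le_c: "g * a \<le> c"
proof -
  have "2 * g * a \<le> f * a"
    using two_g_le a_gt by (intro mult_right_mono) auto
  also have "\<dots> \<le> f * b"
    using two_a_le a_gt f_ge by (intro mult_left_mono) auto
  finally show ?thesis
    using c_eq by linarith
qed

lemma c_gt: "0 < c"
  using ga_le_c mult_pos_pos[of g a] g_ge a_gt by linarith

lemma finite_reps: "finite (reps n)"
proof (rule finite_subset)
  show "reps n \<subseteq> {0..nat n} \<times> {0..nat n} \<times> {0..nat n}"
  proof
    fix t assume "t \<in> reps n"
    then obtain x y z where t: "t = (x, y, z)" and e: "a * int x + b * int y + c * int z = n"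
      unfolding reps_def by auto
    have "int x \<le> a * int x" "int y \<le> b * int y" "int z \<le> c * int z"
      using a_gt b_gt c_gt by (simp_all add: mult_le_cancel_right1)
    moreover have "0 \<le> a * int x" "0 \<le> b * int y" "0 \<le> c * int z"
      using a_gt b_gt c_gt by auto
    ultimately show "t \<in> {0..nat n} \<times> {0..nat n} \<times> {0..nat n}"
      using e t by auto
  qed
qed simp

lemma solution_shape:
  fixes x y z x0 y0 :: int
  assumes "a * x + b * y + c * z = x0 * a + y0 * b"
  obtains j where "y = y0 + j * a - f * z" and "x = x0 + g * z - j * b"
proof -
  have e: "(x - g * z - x0) * a = (y0 - y - f * z) * b"
    using assms unfolding c_eq_diff by (simp add: algebra_simps)
  then have "a dvd (y0 - y - f * z)"
    using coprime_ab by (metis coprime_dvd_mult_left_iff dvd_triv_right)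
  then obtain t where t: "y0 - y - f * z = a * t" ..
  then have "(x - g * z - x0) * a = (t * b) * a"
    using e by (simp add: ac_simps)
  then have "x - g * z - x0 = t * b"
    using a_gt by simp
  with t show thesis
    by (intro that[of "-t"]) (simp_all add: algebra_simps)
qed

text \<open>Both candidates for the Frobenius number have the form \<open>(b - m g - 1) a + (N - 1) b\<close>; for
  these, a solution \<open>(x\<^sub>0 + g z - j b, N - 1 + j a - f z, z)\<close> can only be nonnegative if \<open>j = 0\<close>.\<close>
lemma lattice_shift_eq_0:
  assumes "N \<le> p * f" and "N - m * f + a \<le> f" and "0 \<le> z"
    and y_ge: "0 \<le> N - 1 + j * a - f * z" and x_ge: "0 \<le> b - m * g - 1 + g * z - j * b"
  shows "j = 0"
proof (rule ccontr)
  define w where "w = z - m"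
  assume "j \<noteq> 0"
  then consider "j \<le> -1" | "j = 1" | "2 \<le> j"
    by linarith
  then show False
  proof cases
    case 1
    then have "j * a \<le> -1 * a"
      using a_gt by (intro mult_right_mono) auto
    moreover have "0 \<le> f * z"
      using f_gt assms(3) by simp
    ultimately show False
      using y_ge assms(1) pf_le_a by linarith
  next
    case 2
    then have "0 < g * w"
      using x_ge unfolding w_def by (simp add: algebra_simps)
    then have "f \<le> f * w"
      using g_ge f_ge by (simp add: zero_less_mult_iff)
    moreover have "f * w \<le> N - m * f - 1 + a"
      using y_ge 2 unfolding w_def by (simp add: algebra_simps)
    ultimately show False
      using assms(2) by linarith
  next
    case 3
    have ja: "a \<le> (j - 1) * a"
      using 3 a_gt by (simp add: mult_le_cancel_right1)
    have jb: "2 * ((j - 1) * a) \<le> (j - 1) * b"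
      using 3 two_a_le by (simp add: mult_left_mono mult.left_commute[of 2])
    have gw: "(j - 1) * b + 1 \<le> g * w"
      using x_ge unfolding w_def by (simp add: algebra_simps)
    then have "0 < g * w"
      using ja jb a_gt by linarith
    then have "0 \<le> w"
      using g_ge by (simp add: zero_less_mult_iff)
    then have "2 * (g * w) \<le> f * w"
      using two_g_le by (simp add: mult_right_mono mult.assoc[symmetric])
    moreover have "f * w \<le> N - m * f - 1 + j * a"
      using y_ge unfolding w_def by (simp add: algebra_simps)
    moreover have "j * a = (j - 1) * a + a"
      by (simp add: algebra_simps)
    ultimately show False
      using gw ja jb assms(2) f_le_a a_gt by linarith
  qed
qed

lemma card_reps_below_le:
  assumes "N \<le> p * f" and "N - m * f + a \<le> f"
  shows "card (reps ((b - m * g - 1) * a + (N - 1) * b)) \<le> nat p"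
proof -
  let ?sol = "\<lambda>z. (nat (b - m * g - 1 + g * z), nat (N - 1 - f * z), nat z)"
  have "reps ((b - m * g - 1) * a + (N - 1) * b) \<subseteq> ?sol ` {0..<p}"
  proof
    fix t assume t: "t \<in> reps ((b - m * g - 1) * a + (N - 1) * b)"
    obtain x y z where xyz: "t = (x, y, z)"
      by (cases t)
    obtain j where y: "int y = N - 1 + j * a - f * int z"
      and x: "int x = b - m * g - 1 + g * int z - j * b"
      using solution_shape[of "int x" "int y" "int z" "b - m * g - 1" "N - 1"] t
      unfolding xyz reps_def by auto
    have "j = 0"
      using lattice_shift_eq_0[OF assms, of "int z" j] x y by simp
    with x y have x: "int x = b - m * g - 1 + g * int z" and y: "int y = N - 1 - f * int z"
      by simp_all
    have "f * int z < f * p"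
      using y assms(1) by (simp add: mult.commute)
    then have "int z < p"
      using f_gt by simp
    then show "t \<in> ?sol ` {0..<p}"
      using x y unfolding xyz by (intro image_eqI[of _ _ "int z"]) auto
  qed
  then have "card (reps ((b - m * g - 1) * a + (N - 1) * b)) \<le> card {0..<p}"
    by (rule surj_card_le[rotated]) simp
  then show ?thesis
    by simp
qed

lemma card_reps_frob_le: "card (reps frob) \<le> nat p"
proof (cases "(f - 1) * b + (r + p - 1) * c \<le> (s - 1) * b + (r + p) * c")
  case True
  then have "frob = (s - 1) * b + (r + p) * c - a"
    by (simp add: frob_def)
  also have "\<dots> = (b - (r + p) * g - 1) * a + (p * f - 1) * b"
    by (simp add: c_eq_diff a_eq algebra_simps)
  finally have "frob = (b - (r + p) * g - 1) * a + (p * f - 1) * b" .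
  moreover have "p * f - (r + p) * f + a \<le> f"
    using s_le by (simp add: a_eq algebra_simps)
  ultimately show ?thesis
    using card_reps_below_le[of "p * f" "r + p"] by simp
next
  case False
  then have "frob = (f - 1) * b + (r + p - 1) * c - a"
    by (simp add: frob_def)
  also have "\<dots> = (b - (r + p - 1) * g - 1) * a + (p * f - s - 1) * b"
    by (simp add: c_eq_diff a_eq algebra_simps)
  finally have "frob = (b - (r + p - 1) * g - 1) * a + (p * f - s - 1) * b" .
  moreover have "p * f - s - (r + p - 1) * f + a \<le> f"
    by (simp add: a_eq algebra_simps)
  ultimately show ?thesis
    using card_reps_below_le[of "p * f - s" "r + p - 1"] s_ge by simp
qed

lemma value_le_frob:
  assumes "0 \<le> y" and "y < f" and "0 \<le> z" and "f * z + y < a + p * f"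
  shows "y * b + z * c \<le> frob + a"
proof (cases "z \<le> r + p - 1")
  case True
  then have "y * b + z * c \<le> (f - 1) * b + (r + p - 1) * c"
    using assms b_gt c_gt by (intro add_mono mult_right_mono) auto
  then show ?thesis
    unfolding frob_def by linarith
next
  case False
  then have "f * (r + p) \<le> f * z"
    using f_ge by (intro mult_left_mono) auto
  then have "y \<le> s - 1"
    using assms(4) by (simp add: a_eq algebra_simps)
  moreover have "f * z < f * (r + p + 1)"
    using assms(1,4) s_le by (simp add: a_eq algebra_simps)
  then have "z \<le> r + p"
    using f_ge mult_less_cancel_left_pos[of f z "r + p + 1"] by simp
  ultimately have "y * b + z * c \<le> (s - 1) * b + (r + p) * c"
    using assms b_gt c_gt by (intro add_mono mult_right_mono) auto
  then show ?thesis
    unfolding frob_def by linarith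
qed

lemma mem_reps_of_pair:
  assumes "0 \<le> Y" and "0 \<le> Z" and "a dvd (n - (Y * b + Z * c))" and "Y * b + Z * c < n + a"
  shows "(nat ((n - (Y * b + Z * c)) div a), nat Y, nat Z) \<in> reps n"
proof -
  obtain X where X: "n - (Y * b + Z * c) = a * X"
    using assms(3) ..
  have "a * (-1) < a * X"
    using X assms(4) by simp
  then have "0 \<le> X"
    using a_gt mult_less_cancel_left_pos[of a "-1" X] by simp
  moreover have "(n - (Y * b + Z * c)) div a = X"
    using X a_gt by simp
  ultimately show ?thesis
    using X assms(1,2) unfolding reps_def by (simp add: algebra_simps)
qed

text \<open>The pair \<open>(L - f Z, Z)\<close> lies in the residue class of \<open>L b\<close> modulo \<open>a\<close>, and its value
  \<open>(L - f Z) b + Z c\<close> is at most that of \<open>(L mod f, 2 (L div f) - Z)\<close>; the last hypothesis is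
  what \<open>value_le_frob\<close> needs for the latter.\<close>
lemma z_mem_reps:
  assumes "frob < n" and "a dvd (n - L * b)" and "0 \<le> Z" and "f * Z \<le> L"
    and "L + (L div f - Z) * f < a + p * f"
  shows "Z \<in> (\<lambda>(x, y, z). int z) ` reps n"
proof -
  define m where "m = L div f - Z"
  have "Z = (f * Z) div f"
    using f_ge by simp
  also have "\<dots> \<le> L div f"
    using assms(4) f_ge by (intro zdiv_mono1) auto
  finally have m: "0 \<le> m"
    unfolding m_def by simp
  have L: "L - f * Z = L mod f + m * f"
    unfolding m_def by (simp add: algebra_simps minus_mod_eq_mult_div)
  have val: "(L - f * Z) * b + Z * c = L * b - Z * (g * a)"
    by (simp add: c_eq_diff algebra_simps)
  have "(L - f * Z) * b + Z * c = L mod f * b + (Z + m) * c + m * (g * a)"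
    unfolding L by (simp add: c_eq_diff algebra_simps)
  also have "\<dots> \<le> L mod f * b + (Z + 2 * m) * c"
    using mult_left_mono[OF ga_le_c m] by (simp add: algebra_simps)
  also have "\<dots> \<le> frob + a"
  proof (rule value_le_frob)
    show "0 \<le> L mod f" and "L mod f < f"
      using f_ge by simp_all
    show "0 \<le> Z + 2 * m"
      using assms(3) m by simp
    have "f * (Z + 2 * m) + L mod f = (f * (L div f) + L mod f) + m * f"
      unfolding m_def by (simp add: algebra_simps)
    then show "f * (Z + 2 * m) + L mod f < a + p * f"
      using assms(5) unfolding m_def by simp
  qed
  finally have "(L - f * Z) * b + Z * c \<le> frob + a" .
  moreover have "a dvd (n - L * b) + a * (Z * g)"
    using assms(2) by simp
  then have "a dvd (n - ((L - f * Z) * b + Z * c))"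
    unfolding val by (simp add: algebra_simps)
  ultimately have "(nat ((n - ((L - f * Z) * b + Z * c)) div a), nat (L - f * Z), nat Z) \<in> reps n"
    using assms(1,3,4) by (intro mem_reps_of_pair) auto
  then show ?thesis
    using assms(3) by (intro rev_image_eqI) auto
qed

text \<open>For \<open>0 \<le> y < a\<close> with \<open>y b \<equiv> n (mod a)\<close>, the chains through \<open>L = y\<close> and \<open>L = y + a\<close>
  provide the third coordinates \<open>[q - min q p, q]\<close> and \<open>[z - (p - q) + 1, z]\<close>, where
  \<open>q = y div f\<close> and \<open>z = (y + a) div f\<close>.\<close>
lemma z_intervals_mem_reps:
  fixes y :: int
  defines "q \<equiv> y div f" and "z \<equiv> (y + a) div f"
  assumes "frob < n" and y: "0 \<le> y" "y < a" and dvd_y: "a dvd (n - y * b)"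
  shows "{q - min q p..q} \<subseteq> (\<lambda>(x, y, z). int z) ` reps n"
    and "{z - (p - q) + 1..z} \<subseteq> (\<lambda>(x, y, z). int z) ` reps n"
    and "q + r \<le> z" and "0 \<le> q"
proof -
  have q: "f * q \<le> y" "y < f * q + f"
    unfolding q_def using pos_mod_sign[OF f_gt, of y] pos_mod_bound[OF f_gt, of y]
      minus_mod_eq_mult_div[of y f] by linarith+
  show "0 \<le> q"
    unfolding q_def using y f_gt by (simp add: pos_imp_zdiv_nonneg_iff)
  have "q + r = ((q + r) * f) div f"
    using f_gt by simp
  also have "\<dots> \<le> z"
    unfolding z_def using q(1) a_eq s_ge f_gt by (intro zdiv_mono1) (auto simp: algebra_simps)
  finally show z: "q + r \<le> z" .
  show "{q - min q p..q} \<subseteq> (\<lambda>(x, y, z). int z) ` reps n"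
  proof
    fix Z assume "Z \<in> {q - min q p..q}"
    then have Z: "q - min q p \<le> Z" "Z \<le> q"
      by auto
    show "Z \<in> (\<lambda>(x, y, z). int z) ` reps n"
    proof (rule z_mem_reps[OF assms(3) dvd_y])
      show "0 \<le> Z"
        using Z \<open>0 \<le> q\<close> by simp
      have "f * Z \<le> f * q"
        using Z f_gt by simp
      then show "f * Z \<le> y"
        using q(1) by linarith
      have "(q - Z) * f \<le> p * f"
        using Z f_gt by (intro mult_right_mono) auto
      then show "y + (y div f - Z) * f < a + p * f"
        using y unfolding q_def[symmetric] by linarith
    qed
  qed
  show "{z - (p - q) + 1..z} \<subseteq> (\<lambda>(x, y, z). int z) ` reps n"
  proof
    fix Z assume "Z \<in> {z - (p - q) + 1..z}"
    then have Z: "z - (p - q) + 1 \<le> Z" "Z \<le> z"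
      by auto
    have "a dvd (n - (y + a) * b)"
      using dvd_diff[OF dvd_y dvd_triv_left[of a b]] by (simp add: algebra_simps)
    then show "Z \<in> (\<lambda>(x, y, z). int z) ` reps n"
    proof (rule z_mem_reps[OF assms(3)])
      show "0 \<le> Z"
        using Z z \<open>0 \<le> q\<close> p_le by simp
      have "f * Z \<le> f * z"
        using Z f_gt by simp
      also have "\<dots> \<le> y + a"
        unfolding z_def using pos_mod_sign[OF f_gt, of "y + a"] minus_mod_eq_mult_div[of "y + a" f]
        by linarith
      finally show "f * Z \<le> y + a" .
      have "(z - Z) * f \<le> (p - q - 1) * f"
        using Z f_gt by (intro mult_right_mono) auto
      then show "y + a + ((y + a) div f - Z) * f < a + p * f"
        using q(2) unfolding z_def[symmetric] by (simp add: algebra_simps)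
    qed
  qed
qed

lemma card_reps_gt_frob:
  assumes "frob < n"
  shows "nat p < card (reps n)"
proof -
  obtain y where "0 \<le> y" "y < a" and "a dvd (n - y * b)"
    using coprime_obtain_residue[OF coprime_ab a_gt] .
  note intervals = z_intervals_mem_reps[OF assms this]
  define q where "q = y div f"
  define z where "z = (y + a) div f"
  have "card ({q - min q p..q} \<union> {z - (p - q) + 1..z}) = nat (min q p + 1) + nat (p - q)"
    using intervals(3) p_le unfolding q_def z_def by (subst card_Un_disjoint) auto
  also have "\<dots> = nat p + 1"
    using intervals(4) p_ge unfolding q_def by (simp add: min_def) arith
  finally have "nat p + 1 = card ({q - min q p..q} \<union> {z - (p - q) + 1..z})" ..
  also have "\<dots> \<le> card ((\<lambda>(x, y, z). int z) ` reps n)"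
    using intervals(1,2) unfolding q_def z_def by (intro card_mono finite_imageI finite_reps) auto
  also have "\<dots> \<le> card (reps n)"
    by (rule card_image_le[OF finite_reps])
  finally show ?thesis
    by simp
qed

lemma frob_eq_cases:
  "frob = (if g * a \<le> (a - r * f) * b then (a - r * f - 1) * b + (r + p) * c - a
           else (f - 1) * b + (r + p - 1) * c - a)"
proof -
  have "(s - 1) * b + (r + p) * c - ((f - 1) * b + (r + p - 1) * c) = s * b - g * a"
    by (simp add: c_eq_diff algebra_simps)
  moreover have "a - r * f = s"
    using a_eq by simp
  ultimately show ?thesis
    unfolding frob_def by (auto simp: max_def)
qed

end

lemma frobenius_setting_fib:
  fixes i k p :: nat
  defines "r \<equiv> (int (fib i) - 1) div int (fib k)"
  assumes "3 \<le> k" and "int p \<le> r" and "1 \<le> r"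
  shows "frobenius_setting (fib i) (fib (i + 2)) (fib (i + k)) (fib k) (fib (k - 2)) r
    (int (fib i) - r * int (fib k)) p"
proof
  have k: "k - 2 + 2 = k" and ik: "i + (k - 2) + 2 = i + k"
    using assms(2) by simp_all
  show "int (fib (i + k)) + int (fib (k - 2)) * int (fib i) = int (fib k) * int (fib (i + 2))"
    using fib_add_mult_eq[of i "k - 2"] unfolding k ik of_nat_add[symmetric] of_nat_mult[symmetric]
      of_nat_eq_iff .
  show "2 * int (fib (k - 2)) \<le> int (fib k)"
    using two_fib_le_fib_plus_2[of "k - 2"] unfolding k by linarith
  show "1 \<le> int (fib (k - 2))"
    using fib_neq_0_nat[of "k - 2"] assms(2) by simp
  show "2 * int (fib i) \<le> int (fib (i + 2))"
    using two_fib_le_fib_plus_2[of i] by linarith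
  show "coprime (int (fib i)) (int (fib (i + 2)))"
    unfolding coprime_int_iff by (rule coprime_fib_fib_plus_2)
  have "0 < int (fib k)"
    using fib_neq_0_nat[of k] assms(2) by simp
  then have "0 \<le> (int (fib i) - 1) mod int (fib k)" "(int (fib i) - 1) mod int (fib k) < int (fib k)"
    by simp_all
  moreover have "int (fib i) - 1 = r * int (fib k) + (int (fib i) - 1) mod int (fib k)"
    unfolding r_def by simp
  ultimately show "1 \<le> int (fib i) - r * int (fib k)" "int (fib i) - r * int (fib k) \<le> int (fib k)"
    by linarith+
qed (use assms in simp_all)

theorem theorem5:
  fixes i k p :: nat
  assumes "i \<ge> 3" and "k \<ge> 3"
    and "\<lfloor>(int (fib i) - 1) / int (fib k)\<rfloor> \<ge> int p"
    and "(\<lfloor>(int (fib i) - 1) / int (fib k)\<rfloor>, int p) \<noteq> (0, 0)"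
  shows "let r = \<lfloor>(int (fib i) - 1) / int (fib k)\<rfloor>;
             Fi = int (fib i); Fk = int (fib k); Fi2 = int (fib (i + 2));
             Fik = int (fib (i + k)); Fk2 = int (fib (k - 2))
         in p_frobenius p [fib i, fib (i + 2), fib (i + k)] =
           (if (Fi - r * Fk) * Fi2 \<ge> Fk2 * Fi
            then (Fi - r * Fk - 1) * Fi2 + (r + int p) * Fik - Fi
            else (Fk - 1) * Fi2 + (r + int p - 1) * Fik - Fi)"
proof -
  define r where "r = (int (fib i) - 1) div int (fib k)"
  have floor_eq: "\<lfloor>(int (fib i) - 1) / int (fib k)\<rfloor> = r"
    unfolding r_def by (metis floor_divide_of_int_eq of_int_of_nat_eq)
  with assms(3,4) have "int p \<le> r" and "1 \<le> r"
    by auto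
  with assms(2) interpret frobenius_setting "fib i" "fib (i + 2)" "fib (i + k)" "fib k" "fib (k - 2)" r
    "int (fib i) - r * int (fib k)" p
    unfolding r_def by (rule frobenius_setting_fib)
  have num_repr_eq: "num_repr n [fib i, fib (i + 2), fib (i + k)] = card (reps n)" for n
    unfolding num_repr_three reps_def ..
  have "p_frobenius p [fib i, fib (i + 2), fib (i + k)] = frob"
  proof (rule p_frobenius_eqI)
    show "num_repr frob [fib i, fib (i + 2), fib (i + k)] \<le> p"
      unfolding num_repr_eq using card_reps_frob_le by simp
    show "p < num_repr n [fib i, fib (i + 2), fib (i + k)]" if "frob < n" for n
      unfolding num_repr_eq using card_reps_gt_frob[OF that] by simp
  qed
  then show ?thesis
    unfolding Let_def floor_eq frob_eq_cases by simp
qed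

end
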